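(* Assume $I_1\in L^1(\mu_V)$ and that $I_1,I_2$ are locally bounded. Suppose there exist positive functions $\phi\in\hat{\mathscr C}_{j,V}$ and $h\in C^\infty(\mathbb R^d)$ and constants $b,r>0$ such that for all $x\in\mathbb R^d$, $$\hat L_{j,V}\phi(x)\le -h(x)+b\mathbf 1_{B(0,r)}(x).$$ Then for every $f\in C_c^\infty(\mathbb R^d)$, $$\int f^2h\phi^{-1}\,d\mu_V\le\hat D_{j,V}(f,f)+b\int_{B(0,r)}f^2\phi^{-1}\,d\mu_V.$$ If moreover $\phi\ge c$ for some constant $c>0$, the same inequality holds for every $f\in C_b^\infty(\mathbb R^d)$.
   Context: Let $d\ge1$; $V$ locally bounded measurable with $\int e^{-V}<\infty$, $\mu_V(dx)=e^{-V(x)}dx/\int e^{-V}$. $j\ge0$ is measurable and symmetric on $\{(x,y):x\ne y\}$. $I_1(x):=\int(1\wedge|x-y|^2)j(x,y)\mu_V(dy)$, $I_2(x):=\int_{\{|z|\le1\}}|z|\,|j(x,x+z)e^{-V(x+z)}-j(x,x-z)e^{-V(x-z)}|dz$. Truncated form: $\hat D_{j,V}(f,g):=\frac12\iint_{\{|x-y|>1\}}(f(x)-f(y))(g(x)-g(y))j(x,y)\mu_V(dy)\mu_V(dx)$. Truncated operator: $\hat L_{j,V}f(x):=\int_{\{|x-y|>1\}}(f(y)-f(x))j(x,y)\mu_V(dy)$. $\hat{\mathscr C}_{j,V}$ is the set of $\phi\in C^\infty(\mathbb R^d)$ such that $x\mapsto\int_{\{|x-y|>1\}}|\phi(y)|j(x,y)\mu_V(dy)$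 is locally bounded. $B(0,r)$ is the open ball of radius $r$ centered at $0$. *)

theory Defs
  imports "HOL-Analysis.Analysis"
begin

text \<open>C-infinity functions R^d -> R: differentiable everywhere, and all partial
  derivatives (along the standard basis) are again C-infinity (greatest fixed point).\<close>
coinductive smooth_fun :: "('a::euclidean_space \<Rightarrow> real) \<Rightarrow> bool" where
  "(\<forall>x. f differentiable (at x)) \<Longrightarrow>
   (\<forall>i\<in>Basis. smooth_fun (\<lambda>x. frechet_derivative f (at x) i)) \<Longrightarrow> smooth_fun f"

coinductive smooth_bdd_fun :: "('a::euclidean_space \<Rightarrow> real) \<Rightarrow> bool" where
  "bounded (range f) \<Longrightarrow> (\<forall>x. f differentiable (at x)) \<Longrightarrow>
   (\<forall>i\<in>Basis. smooth_bdd_fun (\<lambda>x. frechet_derivative f (at x) i)) \<Longrightarrow> smooth_bdd_fun f"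

definition Cc_inf :: "('a::euclidean_space \<Rightarrow> real) \<Rightarrow> bool" where
  "Cc_inf f \<longleftrightarrow> smooth_fun f \<and> compact (closure {x. f x \<noteq> 0})"

definition Cb_inf :: "('a::euclidean_space \<Rightarrow> real) \<Rightarrow> bool" where
  "Cb_inf f \<longleftrightarrow> smooth_bdd_fun f"

definition loc_bdd :: "('a::euclidean_space \<Rightarrow> real) \<Rightarrow> bool" where
  "loc_bdd g \<longleftrightarrow> (\<forall>K. compact K \<longrightarrow> bounded (g ` K))"

definition loc_bdd_ennreal :: "('a::euclidean_space \<Rightarrow> ennreal) \<Rightarrow> bool" where
  "loc_bdd_ennreal g \<longleftrightarrow> (\<forall>K. compact K \<longrightarrow> (\<exists>C::real. \<forall>x\<in>K. g x \<le> ennreal C))"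

definition muV :: "('a::euclidean_space \<Rightarrow> real) \<Rightarrow> 'a measure" where
  "muV V = density lborel (\<lambda>x. ennreal (exp (- V x) / (\<integral>y. exp (- V y) \<partial>lborel)))"

definition I1 :: "('a::euclidean_space \<Rightarrow> 'a \<Rightarrow> real) \<Rightarrow> ('a \<Rightarrow> real) \<Rightarrow> 'a \<Rightarrow> ennreal" where
  "I1 j V x = (\<integral>\<^sup>+ y. ennreal (min 1 ((norm (x - y))\<^sup>2) * j x y) \<partial>muV V)"

definition I2 :: "('a::euclidean_space \<Rightarrow> 'a \<Rightarrow> real) \<Rightarrow> ('a \<Rightarrow> real) \<Rightarrow> 'a \<Rightarrow> ennreal" where
  "I2 j V x = (\<integral>\<^sup>+ z. indicator (cball 0 1) z *
      ennreal (norm z * \<bar>j x (x + z) * exp (- V (x + z)) - j x (x - z) * exp (- V (x - z))\<bar>) \<partial>lborel)"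

definition hatD :: "('a::euclidean_space \<Rightarrow> 'a \<Rightarrow> real) \<Rightarrow> ('a \<Rightarrow> real) \<Rightarrow> ('a \<Rightarrow> real) \<Rightarrow> ('a \<Rightarrow> real) \<Rightarrow> real" where
  "hatD j V f g = 1/2 * (\<integral>p. (case p of (x, y) \<Rightarrow>
      indicator {q. norm (fst q - snd q) > 1} (x, y) * ((f x - f y) * (g x - g y) * j x y))
      \<partial>(muV V \<Otimes>\<^sub>M muV V))"

definition hatL :: "('a::euclidean_space \<Rightarrow> 'a \<Rightarrow> real) \<Rightarrow> ('a \<Rightarrow> real) \<Rightarrow> ('a \<Rightarrow> real) \<Rightarrow> 'a \<Rightarrow> real" where
  "hatL j V f x = (\<integral>y. indicator {y. norm (x - y) > 1} y * ((f y - f x) * j x y) \<partial>muV V)"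

definition hatC :: "('a::euclidean_space \<Rightarrow> 'a \<Rightarrow> real) \<Rightarrow> ('a \<Rightarrow> real) \<Rightarrow> ('a \<Rightarrow> real) \<Rightarrow> bool" where
  "hatC j V \<phi> \<longleftrightarrow> smooth_fun \<phi> \<and>
     loc_bdd_ennreal (\<lambda>x. \<integral>\<^sup>+ y. indicator {y. norm (x - y) > 1} y * ennreal (\<bar>\<phi> y\<bar> * j x y) \<partial>muV V)"

end

theory Submission
  imports Defs
begin

(* Write A(x,y) = j(x,y) 1{|x-y| > 1} for the truncated kernel.  The heart of the
   argument is measure-theoretic and is proved once for an arbitrary symmetric
   kernel on a sigma-finite space (lyapunov_hardy_inequality): multiply the
   Lyapunov condition  hatL \<phi> \<le> -h + b 1_B  by f(x)\<^sup>2/\<phi>(x), integrate, and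
   compare the resulting cross term with the Dirichlet form via the two-point
   inequality  u\<^sup>2 + v\<^sup>2 \<le> (u-v)\<^sup>2 + u\<^sup>2 \<phi>(y)/\<phi>(x) + v\<^sup>2 \<phi>(x)/\<phi>(y)  and the symmetry
   of A.  Everything is done in [0,\<infinity>], so only one finiteness condition is needed.

   The
   proposition holds for every bounded Borel f (truncated_hardy_bounded); both
   C_c^\<infinity> and C_b^\<infinity> functions are bounded, so the theorem follows. *)

(* If c = \<infinity> there is nothing to show; otherwise N is finite and can be cancelled. *)
lemma ennreal_hardy_cancel:
  fixes H N P D c :: ennreal
  assumes main: "H + N \<le> P + c" and exch: "2 * P \<le> D + 2 * N" and P_fin: "P < \<infinity>"
  shows "H \<le> ennreal (1/2) * D + c"
proof (cases "c = \<infinity>")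
  case True
  then show ?thesis by simp
next
  case False
  have N_fin: "2 * N \<noteq> \<infinity>"
    using main P_fin False by (auto simp: ennreal_mult_eq_top_iff top_unique dest: add_increasing2[OF zero_le])
  have "2 * N + 2 * H \<le> 2 * N + (D + 2 * c)"
  proof -
    have "2 * N + 2 * H = 2 * (H + N)" by (simp add: algebra_simps)
    also have "\<dots> \<le> 2 * P + 2 * c" using main by (metis distrib_left mult_left_mono zero_le)
    also have "\<dots> \<le> D + 2 * N + 2 * c" using exch by (simp add: add_right_mono)
    finally show ?thesis by (simp add: algebra_simps)
  qed
  then have "2 * H \<le> D + 2 * c" using N_fin by (simp add: ennreal_add_left_cancel_le)
  then have "ennreal (1/2) * (2 * H) \<le> ennreal (1/2) * (D + 2 * c)" by (rule mult_left_mono) simp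
  moreover have "ennreal (1/2) * 2 = 1"
    using ennreal_mult[of "1/2" 2] by simp
  ultimately show ?thesis by (simp add: distrib_left mult.assoc[symmetric])
qed

(* The pointwise inequality behind the exchange argument:
   u\<^sup>2 + v\<^sup>2 \<le> (u - v)\<^sup>2 + u\<^sup>2 q/p + v\<^sup>2 p/q for p, q > 0, since the
   difference of the two sides is (u q - v p)\<^sup>2 / (p q). *)
lemma two_point_weighted_bound:
  fixes u v p q :: real
  assumes "p > 0" "q > 0"
  shows "u\<^sup>2 + v\<^sup>2 \<le> (u - v)\<^sup>2 + u\<^sup>2 * q / p + v\<^sup>2 * p / q"
proof -
  have "u\<^sup>2 * q / p + v\<^sup>2 * p / q - 2 * u * v = (u * q - v * p)\<^sup>2 / (p * q)"
    using assms by (simp add: field_simps power2_eq_square)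
  also have "\<dots> \<ge> 0" using assms by simp
  finally show ?thesis by (simp add: power2_eq_square algebra_simps)
qed

lemma (in sigma_finite_measure) nn_integral_iterated_add:
  assumes "case_prod F \<in> borel_measurable (M \<Otimes>\<^sub>M M)" "case_prod G \<in> borel_measurable (M \<Otimes>\<^sub>M M)"
  shows "(\<integral>\<^sup>+x. \<integral>\<^sup>+y. F x y + G x y \<partial>M \<partial>M)
           = (\<integral>\<^sup>+x. \<integral>\<^sup>+y. F x y \<partial>M \<partial>M) + (\<integral>\<^sup>+x. \<integral>\<^sup>+y. G x y \<partial>M \<partial>M)"
proof -
  have "(\<integral>\<^sup>+x. \<integral>\<^sup>+y. F x y + G x y \<partial>M \<partial>M)
          = (\<integral>\<^sup>+x. (\<integral>\<^sup>+y. F x y \<partial>M) + (\<integral>\<^sup>+y. G x y \<partial>M) \<partial>M)"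
    using assms by (intro nn_integral_cong nn_integral_add) (auto dest: measurable_compose_Pair1)
  also have "\<dots> = (\<integral>\<^sup>+x. \<integral>\<^sup>+y. F x y \<partial>M \<partial>M) + (\<integral>\<^sup>+x. \<integral>\<^sup>+y. G x y \<partial>M \<partial>M)"
    using assms by (intro nn_integral_add borel_measurable_nn_integral)
  finally show ?thesis .
qed

lemma (in sigma_finite_measure) symmetric_kernel_swap:
  fixes A F :: "'a \<Rightarrow> 'a \<Rightarrow> real"
  assumes A_meas: "(\<lambda>p. A (fst p) (snd p)) \<in> borel_measurable (M \<Otimes>\<^sub>M M)"
    and F_meas: "(\<lambda>p. F (fst p) (snd p)) \<in> borel_measurable (M \<Otimes>\<^sub>M M)"
    and A_sym: "\<And>x y. A x y = A y x"
  shows "(\<integral>\<^sup>+x. \<integral>\<^sup>+y. ennreal (F y x * A x y) \<partial>M \<partial>M) = (\<integral>\<^sup>+x. \<integral>\<^sup>+y. ennreal (F x y * A x y) \<partial>M \<partial>M)"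
proof -
  interpret MM: pair_sigma_finite M M ..
  have "(\<lambda>(x, y). ennreal (F x y * A x y)) \<in> borel_measurable (M \<Otimes>\<^sub>M M)"
    using A_meas F_meas by measurable
  from MM.Fubini'[OF this] show ?thesis by (simp add: A_sym)
qed

(* The energy of f against a symmetric kernel is controlled by the
   "diagonal" integral of f(x)\<^sup>2 A(x,y); used to show that the truncated
   Dirichlet form of a bounded function is a finite (hence genuine) integral. *)
lemma (in sigma_finite_measure) dirichlet_energy_le:
  fixes A :: "'a \<Rightarrow> 'a \<Rightarrow> real" and f :: "'a \<Rightarrow> real"
  assumes A_meas: "(\<lambda>p. A (fst p) (snd p)) \<in> borel_measurable (M \<Otimes>\<^sub>M M)"
    and A_nn: "\<And>x y. 0 \<le> A x y" and A_sym: "\<And>x y. A x y = A y x"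
    and f_meas: "f \<in> borel_measurable M"
  shows "(\<integral>\<^sup>+x. \<integral>\<^sup>+y. ennreal ((f x - f y)\<^sup>2 * A x y) \<partial>M \<partial>M)
           \<le> 4 * (\<integral>\<^sup>+x. \<integral>\<^sup>+y. ennreal ((f x)\<^sup>2 * A x y) \<partial>M \<partial>M)"
proof -
  note [measurable] = A_meas f_meas
  define P where "P = (\<integral>\<^sup>+x. \<integral>\<^sup>+y. ennreal ((f x)\<^sup>2 * A x y) \<partial>M \<partial>M)"
  have swap: "(\<integral>\<^sup>+x. \<integral>\<^sup>+y. ennreal ((f y)\<^sup>2 * A x y) \<partial>M \<partial>M) = P"
    unfolding P_def by (rule symmetric_kernel_swap[where F="\<lambda>x y. (f x)\<^sup>2"]) (measurable, rule A_sym)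
  have "(\<integral>\<^sup>+x. \<integral>\<^sup>+y. ennreal ((f x - f y)\<^sup>2 * A x y) \<partial>M \<partial>M)
          \<le> (\<integral>\<^sup>+x. \<integral>\<^sup>+y. (ennreal ((f x)\<^sup>2 * A x y) + ennreal ((f y)\<^sup>2 * A x y)) + (ennreal ((f x)\<^sup>2 * A x y) + ennreal ((f y)\<^sup>2 * A x y)) \<partial>M \<partial>M)"
  proof (intro nn_integral_mono)
    fix x y
    have "(f x - f y)\<^sup>2 \<le> 2 * (f x)\<^sup>2 + 2 * (f y)\<^sup>2"
      using zero_le_power2[of "f x + f y"] by (simp add: power2_eq_square algebra_simps)
    from mult_right_mono[OF this A_nn]
    have "(f x - f y)\<^sup>2 * A x y \<le> ((f x)\<^sup>2 * A x y + (f y)\<^sup>2 * A x y) + ((f x)\<^sup>2 * A x y + (f y)\<^sup>2 * A x y)"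
      by (simp add: algebra_simps)
    then have "ennreal ((f x - f y)\<^sup>2 * A x y) \<le> ennreal (((f x)\<^sup>2 * A x y + (f y)\<^sup>2 * A x y) + ((f x)\<^sup>2 * A x y + (f y)\<^sup>2 * A x y))"
      by (rule ennreal_leI)
    also have "\<dots> = (ennreal ((f x)\<^sup>2 * A x y) + ennreal ((f y)\<^sup>2 * A x y)) + (ennreal ((f x)\<^sup>2 * A x y) + ennreal ((f y)\<^sup>2 * A x y))"
      using A_nn[of x y] by (simp only: ennreal_plus add_nonneg_nonneg zero_le_power2 mult_nonneg_nonneg)
    finally show "ennreal ((f x - f y)\<^sup>2 * A x y) \<le> \<dots>" .
  qed
  also have "\<dots> = (P + P) + (P + P)"
  proof -
    have "(\<integral>\<^sup>+x. \<integral>\<^sup>+y. ennreal ((f x)\<^sup>2 * A x y) + ennreal ((f y)\<^sup>2 * A x y) \<partial>M \<partial>M)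
            = P + (\<integral>\<^sup>+x. \<integral>\<^sup>+y. ennreal ((f y)\<^sup>2 * A x y) \<partial>M \<partial>M)"
      unfolding P_def by (rule nn_integral_iterated_add) measurable
    then have sum: "(\<integral>\<^sup>+x. \<integral>\<^sup>+y. ennreal ((f x)\<^sup>2 * A x y) + ennreal ((f y)\<^sup>2 * A x y) \<partial>M \<partial>M) = P + P"
      unfolding swap .
    have meas: "(\<lambda>(x, y). ennreal ((f x)\<^sup>2 * A x y) + ennreal ((f y)\<^sup>2 * A x y)) \<in> borel_measurable (M \<Otimes>\<^sub>M M)"
      by measurable
    show ?thesis by (simp only: nn_integral_iterated_add[OF meas meas] sum)
  qed
  finally show ?thesis unfolding P_def by (simp add: mult_2[symmetric] mult.assoc[symmetric])
qed

(* Multiplying the Lyapunov condition at x by the weight f(x)\<^sup>2/\<phi>(x). *)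
lemma lyapunov_weighted_pointwise:
  fixes M :: "'a measure" and A :: "'a \<Rightarrow> 'a \<Rightarrow> real" and \<phi> h f :: "'a \<Rightarrow> real" and S :: "'a set" and b :: real
  assumes A_sec: "(\<lambda>y. A x y) \<in> borel_measurable M"
    and phi_meas: "\<phi> \<in> borel_measurable M" and phi_pos: "\<And>x. 0 < \<phi> x"
    and lyap: "ennreal (h x) + (\<integral>\<^sup>+y. ennreal (\<phi> y * A x y) \<partial>M)
                 \<le> ennreal (\<phi> x) * (\<integral>\<^sup>+y. ennreal (A x y) \<partial>M) + ennreal b * indicator S x"
  shows "ennreal ((f x)\<^sup>2 * h x / \<phi> x) + (\<integral>\<^sup>+y. ennreal ((f x)\<^sup>2 * \<phi> y / \<phi> x * A x y) \<partial>M)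
      \<le> (\<integral>\<^sup>+y. ennreal ((f x)\<^sup>2 * A x y) \<partial>M) + ennreal b * (indicator S x * ennreal ((f x)\<^sup>2 / \<phi> x))"
proof -
  note [measurable] = A_sec phi_meas
  define w where "w = (f x)\<^sup>2 / \<phi> x"
  have w_nn: "0 \<le> w" and w_phi: "w * \<phi> x = (f x)\<^sup>2"
    using phi_pos[of x] by (simp_all add: w_def)
  have "ennreal ((f x)\<^sup>2 * h x / \<phi> x) + (\<integral>\<^sup>+y. ennreal ((f x)\<^sup>2 * \<phi> y / \<phi> x * A x y) \<partial>M)
      = ennreal w * ennreal (h x) + (\<integral>\<^sup>+y. ennreal w * ennreal (\<phi> y * A x y) \<partial>M)"
  proof -
    have "ennreal ((f x)\<^sup>2 * h x / \<phi> x) = ennreal w * ennreal (h x)"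
      using ennreal_mult'[OF w_nn, of "h x"] by (simp add: w_def)
    moreover have "ennreal ((f x)\<^sup>2 * \<phi> y / \<phi> x * A x y) = ennreal w * ennreal (\<phi> y * A x y)" for y
      using ennreal_mult'[OF w_nn, of "\<phi> y * A x y"] by (simp add: w_def mult.assoc)
    ultimately show ?thesis by simp
  qed
  also have "\<dots> = ennreal w * (ennreal (h x) + (\<integral>\<^sup>+y. ennreal (\<phi> y * A x y) \<partial>M))"
    by (simp add: nn_integral_cmult distrib_left)
  also have "\<dots> \<le> ennreal w * (ennreal (\<phi> x) * (\<integral>\<^sup>+y. ennreal (A x y) \<partial>M) + ennreal b * indicator S x)"
    by (intro mult_left_mono lyap) simp
  also have "\<dots> = (ennreal w * ennreal (\<phi> x)) * (\<integral>\<^sup>+y. ennreal (A x y) \<partial>M) + ennreal b * (indicator S x * ennreal w)"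
    by (simp add: distrib_left mult_ac)
  also have "\<dots> = (\<integral>\<^sup>+y. ennreal ((f x)\<^sup>2 * A x y) \<partial>M) + ennreal b * (indicator S x * ennreal w)"
    using ennreal_mult'[OF w_nn, of "\<phi> x"] by (simp add: w_phi ennreal_mult' nn_integral_cmult)
  finally show ?thesis unfolding w_def .
qed

(* Integrating the weighted Lyapunov condition: H + N \<le> P + b B, where
   N = \<integral>\<integral> f(x)\<^sup>2 \<phi>(y)/\<phi>(x) A(x,y) is the cross term and P = \<integral>\<integral> f(x)\<^sup>2 A(x,y). *)
lemma (in sigma_finite_measure) lyapunov_weighted_integral:
  fixes A :: "'a \<Rightarrow> 'a \<Rightarrow> real" and \<phi> h f :: "'a \<Rightarrow> real" and S :: "'a set" and b :: real
  assumes A_meas: "(\<lambda>p. A (fst p) (snd p)) \<in> borel_measurable (M \<Otimes>\<^sub>M M)"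
    and phi_meas: "\<phi> \<in> borel_measurable M" and phi_pos: "\<And>x. 0 < \<phi> x"
    and h_meas: "h \<in> borel_measurable M" and f_meas: "f \<in> borel_measurable M"
    and S_meas: "S \<in> sets M"
    and lyap: "\<And>x. ennreal (h x) + (\<integral>\<^sup>+y. ennreal (\<phi> y * A x y) \<partial>M)
                     \<le> ennreal (\<phi> x) * (\<integral>\<^sup>+y. ennreal (A x y) \<partial>M) + ennreal b * indicator S x"
  shows "(\<integral>\<^sup>+x. ennreal ((f x)\<^sup>2 * h x / \<phi> x) \<partial>M)
           + (\<integral>\<^sup>+x. \<integral>\<^sup>+y. ennreal ((f x)\<^sup>2 * \<phi> y / \<phi> x * A x y) \<partial>M \<partial>M)
         \<le> (\<integral>\<^sup>+x. \<integral>\<^sup>+y. ennreal ((f x)\<^sup>2 * A x y) \<partial>M \<partial>M)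
           + ennreal b * (\<integral>\<^sup>+x. indicator S x * ennreal ((f x)\<^sup>2 / \<phi> x) \<partial>M)"
proof -
  note [measurable] = A_meas phi_meas h_meas f_meas S_meas
  have "(\<integral>\<^sup>+x. ennreal ((f x)\<^sup>2 * h x / \<phi> x) \<partial>M) + (\<integral>\<^sup>+x. \<integral>\<^sup>+y. ennreal ((f x)\<^sup>2 * \<phi> y / \<phi> x * A x y) \<partial>M \<partial>M)
      = (\<integral>\<^sup>+x. ennreal ((f x)\<^sup>2 * h x / \<phi> x) + (\<integral>\<^sup>+y. ennreal ((f x)\<^sup>2 * \<phi> y / \<phi> x * A x y) \<partial>M) \<partial>M)"
    by (rule nn_integral_add[symmetric]) measurable
  also have "\<dots> \<le> (\<integral>\<^sup>+x. (\<integral>\<^sup>+y. ennreal ((f x)\<^sup>2 * A x y) \<partial>M) + ennreal b * (indicator S x * ennreal ((f x)\<^sup>2 / \<phi> x)) \<partial>M)"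
  proof (intro nn_integral_mono lyapunov_weighted_pointwise[OF _ phi_meas phi_pos lyap])
    show "(\<lambda>y. A x y) \<in> borel_measurable M" if "x \<in> space M" for x
      using measurable_compose_Pair1[OF that A_meas] by simp
  qed
  also have "\<dots> = (\<integral>\<^sup>+x. \<integral>\<^sup>+y. ennreal ((f x)\<^sup>2 * A x y) \<partial>M \<partial>M)
                 + ennreal b * (\<integral>\<^sup>+x. indicator S x * ennreal ((f x)\<^sup>2 / \<phi> x) \<partial>M)"
    by (subst nn_integral_add) (measurable, simp add: nn_integral_cmult)
  finally show ?thesis .
qed

(* Symmetrising P = \<integral>\<integral> f(x)\<^sup>2 A(x,y) with the two-point bound:
   2P \<le> D + 2N with D the energy and N the cross term above. *)
lemma (in sigma_finite_measure) symmetric_exchange: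
  fixes A :: "'a \<Rightarrow> 'a \<Rightarrow> real" and \<phi> f :: "'a \<Rightarrow> real"
  assumes A_meas: "(\<lambda>p. A (fst p) (snd p)) \<in> borel_measurable (M \<Otimes>\<^sub>M M)"
    and A_nn: "\<And>x y. 0 \<le> A x y" and A_sym: "\<And>x y. A x y = A y x"
    and phi_meas: "\<phi> \<in> borel_measurable M" and phi_pos: "\<And>x. 0 < \<phi> x"
    and f_meas: "f \<in> borel_measurable M"
  shows "2 * (\<integral>\<^sup>+x. \<integral>\<^sup>+y. ennreal ((f x)\<^sup>2 * A x y) \<partial>M \<partial>M)
         \<le> (\<integral>\<^sup>+x. \<integral>\<^sup>+y. ennreal ((f x - f y)\<^sup>2 * A x y) \<partial>M \<partial>M)
           + 2 * (\<integral>\<^sup>+x. \<integral>\<^sup>+y. ennreal ((f x)\<^sup>2 * \<phi> y / \<phi> x * A x y) \<partial>M \<partial>M)"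
proof -
  note [measurable] = A_meas phi_meas f_meas
  have "2 * (\<integral>\<^sup>+x. \<integral>\<^sup>+y. ennreal ((f x)\<^sup>2 * A x y) \<partial>M \<partial>M) = (\<integral>\<^sup>+x. \<integral>\<^sup>+y. ennreal ((f x)\<^sup>2 * A x y) + ennreal ((f y)\<^sup>2 * A x y) \<partial>M \<partial>M)"
    unfolding mult_2
    by (subst nn_integral_iterated_add, measurable,
        subst symmetric_kernel_swap[where F="\<lambda>x y. (f x)\<^sup>2"], measurable, rule A_sym, rule refl)
  also have "\<dots> \<le> (\<integral>\<^sup>+x. \<integral>\<^sup>+y. ennreal ((f x - f y)\<^sup>2 * A x y)
               + (ennreal ((f x)\<^sup>2 * \<phi> y / \<phi> x * A x y) + ennreal ((f y)\<^sup>2 * \<phi> x / \<phi> y * A x y)) \<partial>M \<partial>M)"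
  proof (intro nn_integral_mono)
    fix x y
    have "(f x)\<^sup>2 * A x y + (f y)\<^sup>2 * A x y
        \<le> (f x - f y)\<^sup>2 * A x y + ((f x)\<^sup>2 * \<phi> y / \<phi> x * A x y + (f y)\<^sup>2 * \<phi> x / \<phi> y * A x y)"
      using mult_right_mono[OF two_point_weighted_bound[OF phi_pos[of x] phi_pos[of y], where u="f x" and v="f y"] A_nn[of x y]]
      by (simp add: algebra_simps)
    moreover have "0 \<le> (f x)\<^sup>2 * A x y" "0 \<le> (f y)\<^sup>2 * A x y" "0 \<le> (f x - f y)\<^sup>2 * A x y"
      "0 \<le> (f x)\<^sup>2 * \<phi> y / \<phi> x * A x y" "0 \<le> (f y)\<^sup>2 * \<phi> x / \<phi> y * A x y"
      using A_nn[of x y] phi_pos[of x] phi_pos[of y] by simp_all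
    ultimately show "ennreal ((f x)\<^sup>2 * A x y) + ennreal ((f y)\<^sup>2 * A x y)
        \<le> ennreal ((f x - f y)\<^sup>2 * A x y)
           + (ennreal ((f x)\<^sup>2 * \<phi> y / \<phi> x * A x y) + ennreal ((f y)\<^sup>2 * \<phi> x / \<phi> y * A x y))"
      by (simp add: ennreal_plus[symmetric] del: ennreal_plus)
  qed
  also have "\<dots> = (\<integral>\<^sup>+x. \<integral>\<^sup>+y. ennreal ((f x - f y)\<^sup>2 * A x y) \<partial>M \<partial>M)
      + 2 * (\<integral>\<^sup>+x. \<integral>\<^sup>+y. ennreal ((f x)\<^sup>2 * \<phi> y / \<phi> x * A x y) \<partial>M \<partial>M)"
    unfolding mult_2
    by (subst nn_integral_iterated_add, measurable, subst nn_integral_iterated_add, measurable,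
        subst symmetric_kernel_swap[where F="\<lambda>x y. (f x)\<^sup>2 * \<phi> y / \<phi> x"], measurable, rule A_sym, rule refl)
  finally show ?thesis .
qed

lemma (in sigma_finite_measure) lyapunov_hardy_inequality:
  fixes A :: "'a \<Rightarrow> 'a \<Rightarrow> real" and \<phi> h f :: "'a \<Rightarrow> real" and S :: "'a set" and b :: real
  assumes A_meas: "(\<lambda>p. A (fst p) (snd p)) \<in> borel_measurable (M \<Otimes>\<^sub>M M)"
    and A_nn: "\<And>x y. 0 \<le> A x y" and A_sym: "\<And>x y. A x y = A y x"
    and phi_meas: "\<phi> \<in> borel_measurable M" and phi_pos: "\<And>x. 0 < \<phi> x"
    and h_meas: "h \<in> borel_measurable M" and f_meas: "f \<in> borel_measurable M"
    and S_meas: "S \<in> sets M"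
    and lyap: "\<And>x. ennreal (h x) + (\<integral>\<^sup>+y. ennreal (\<phi> y * A x y) \<partial>M)
                     \<le> ennreal (\<phi> x) * (\<integral>\<^sup>+y. ennreal (A x y) \<partial>M) + ennreal b * indicator S x"
    and P_fin: "(\<integral>\<^sup>+x. \<integral>\<^sup>+y. ennreal ((f x)\<^sup>2 * A x y) \<partial>M \<partial>M) < \<infinity>"
  shows "(\<integral>\<^sup>+x. ennreal ((f x)\<^sup>2 * h x / \<phi> x) \<partial>M)
           \<le> ennreal (1/2) * (\<integral>\<^sup>+x. \<integral>\<^sup>+y. ennreal ((f x - f y)\<^sup>2 * A x y) \<partial>M \<partial>M)
              + ennreal b * (\<integral>\<^sup>+x. indicator S x * ennreal ((f x)\<^sup>2 / \<phi> x) \<partial>M)"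
  using ennreal_hardy_cancel[OF lyapunov_weighted_integral[OF A_meas phi_meas phi_pos h_meas f_meas S_meas lyap]
          symmetric_exchange[OF A_meas A_nn A_sym phi_meas phi_pos f_meas] P_fin] .

lemma sets_muV[measurable_cong]: "sets (muV V) = sets borel"
  by (simp add: muV_def)

lemma space_muV[simp]: "space (muV V) = UNIV"
  by (simp add: muV_def)

lemma sets_muV_pair: "sets (muV V \<Otimes>\<^sub>M muV V) = sets (borel :: ('a::euclidean_space \<times> 'a) measure)"
  by (metis sets_pair_measure_cong sets_muV borel_prod)

lemma finite_measure_muV:
  fixes V :: "'a::euclidean_space \<Rightarrow> real"
  assumes V_int: "integrable lborel (\<lambda>x. exp (- V x))"
  shows "finite_measure (muV V)"
proof -
  define Z where "Z = (\<integral>y. exp (- V y) \<partial>lborel)"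
  have Vm: "(\<lambda>x. exp (- V x)) \<in> borel_measurable lborel" using V_int by auto
  have "emeasure (muV V) UNIV = (\<integral>\<^sup>+x. ennreal (exp (- V x)) * ennreal (1/Z) \<partial>lborel)"
    unfolding muV_def Z_def[symmetric] using Vm
    by (subst emeasure_density) (auto intro!: nn_integral_cong simp: ennreal_mult'[symmetric])
  also have "\<dots> = (\<integral>\<^sup>+x. ennreal (exp (- V x)) \<partial>lborel) * ennreal (1/Z)"
    by (rule nn_integral_multc) (use Vm in auto)
  also have "\<dots> < \<infinity>"
    using V_int unfolding integrable_iff_bounded by (simp add: ennreal_mult_less_top)
  finally show ?thesis
    by (intro finite_measureI) (simp add: less_top)
qed

lemma smooth_fun_continuous: "smooth_fun f \<Longrightarrow> continuous_on UNIV f"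
  by (erule smooth_fun.cases)
     (simp add: differentiable_imp_continuous_on differentiable_on_def differentiable_at_withinI)

lemma smooth_fun_measurable: "smooth_fun f \<Longrightarrow> f \<in> borel_measurable borel"
  by (rule borel_measurable_continuous_onI[OF smooth_fun_continuous])

lemma Cc_inf_bounded:
  assumes "Cc_inf f"
  shows "f \<in> borel_measurable borel" and "\<exists>K. \<forall>x. \<bar>f x\<bar> \<le> K"
proof -
  define S where "S = closure {x. f x \<noteq> 0}"
  have f_smooth: "smooth_fun f" and "compact S"
    using assms unfolding Cc_inf_def S_def by auto
  show "f \<in> borel_measurable borel" by (rule smooth_fun_measurable[OF f_smooth])
  have "compact (f ` S)"
    using \<open>compact S\<close> continuous_on_subset[OF smooth_fun_continuous[OF f_smooth]]
    by (intro compact_continuous_image) auto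
  then have "bounded (f ` S)" by (rule compact_imp_bounded)
  then obtain K where K: "\<And>x. x \<in> S \<Longrightarrow> \<bar>f x\<bar> \<le> K"
    unfolding bounded_iff by (auto simp: real_norm_def)
  have "\<bar>f x\<bar> \<le> max K 0" for x
    using K[of x] closure_subset[of "{x. f x \<noteq> 0}"] unfolding S_def by (cases "f x = 0") auto
  then show "\<exists>K. \<forall>x. \<bar>f x\<bar> \<le> K" by blast
qed

lemma Cb_inf_bounded:
  assumes "Cb_inf f"
  shows "f \<in> borel_measurable borel" and "\<exists>K. \<forall>x. \<bar>f x\<bar> \<le> K"
proof -
  have "continuous_on UNIV f" "bounded (range f)"
    using assms unfolding Cb_inf_def
    by (auto elim!: smooth_bdd_fun.cases
             simp: differentiable_imp_continuous_on differentiable_on_def differentiable_at_withinI)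
  then show "f \<in> borel_measurable borel" and "\<exists>K. \<forall>x. \<bar>f x\<bar> \<le> K"
    by (auto intro: borel_measurable_continuous_onI simp: bounded_iff)
qed

lemma loc_bdd_ennreal_finite: "loc_bdd_ennreal g \<Longrightarrow> g x < \<infinity>"
  unfolding loc_bdd_ennreal_def
  by (metis compact_sing ennreal_less_top infinity_ennreal_def le_less_trans singletonI)

(* The kernel j restricted to long jumps |x - y| > 1; both the truncated
   operator hatL and the truncated form hatD are integrals against it. *)
definition trunc_kernel :: "('a::euclidean_space \<Rightarrow> 'a \<Rightarrow> real) \<Rightarrow> 'a \<Rightarrow> 'a \<Rightarrow> real" where
  "trunc_kernel j x y = (if 1 < norm (x - y) then j x y else 0)"

lemma trunc_kernel_nonneg:
  "(\<And>x y. x \<noteq> y \<Longrightarrow> 0 \<le> j x y) \<Longrightarrow> 0 \<le> trunc_kernel j x y"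
  by (cases "x = y") (auto simp: trunc_kernel_def)

lemma trunc_kernel_sym:
  "(\<And>x y. x \<noteq> y \<Longrightarrow> j x y = j y x) \<Longrightarrow> trunc_kernel j x y = trunc_kernel j y x"
  by (cases "x = y") (auto simp: trunc_kernel_def norm_minus_commute)

lemma trunc_kernel_measurable:
  assumes "(\<lambda>p. j (fst p) (snd p)) \<in> borel_measurable borel"
  shows "(\<lambda>p. trunc_kernel j (fst p) (snd p)) \<in> borel_measurable (muV V \<Otimes>\<^sub>M muV V)"
proof -
  have [measurable]: "(\<lambda>p. j (fst p) (snd p)) \<in> borel_measurable (muV V \<Otimes>\<^sub>M muV V)"
    unfolding measurable_cong_sets[OF sets_muV_pair refl] by (rule assms)
  show ?thesis unfolding trunc_kernel_def by measurable
qed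

lemma trunc_kernel_le_I1:
  assumes j_nonneg: "\<And>x y. x \<noteq> y \<Longrightarrow> 0 \<le> j x y"
  shows "(\<integral>\<^sup>+y. ennreal (trunc_kernel j x y) \<partial>muV V) \<le> I1 j V x"
  unfolding I1_def
proof (intro nn_integral_mono ennreal_leI)
  fix y
  show "trunc_kernel j x y \<le> min 1 ((norm (x - y))\<^sup>2) * j x y"
  proof (cases "1 < norm (x - y)")
    case True
    then have "1 < (norm (x - y))\<^sup>2" using one_less_power[of "norm (x - y)" 2] by simp
    then show ?thesis using True by (simp add: trunc_kernel_def)
  next
    case False
    then show ?thesis using j_nonneg[of x y] by (cases "x = y") (auto simp: trunc_kernel_def)
  qed
qed

lemma I1_measurable:
  assumes V_int: "integrable lborel (\<lambda>x. exp (- V x))"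
    and j_meas: "(\<lambda>p. j (fst p) (snd p)) \<in> borel_measurable borel"
  shows "I1 j (V :: 'a::euclidean_space \<Rightarrow> real) \<in> borel_measurable (muV V)"
proof -
  interpret finite_measure "muV V" by (rule finite_measure_muV[OF V_int])
  have [measurable]: "(\<lambda>p. j (fst p) (snd p)) \<in> borel_measurable (muV V \<Otimes>\<^sub>M muV V)"
    unfolding measurable_cong_sets[OF sets_muV_pair refl] by (rule j_meas)
  have "(\<lambda>(x, y). ennreal (min 1 ((norm (x - y))\<^sup>2) * j x y)) \<in> borel_measurable (muV V \<Otimes>\<^sub>M muV V)"
    by measurable
  from borel_measurable_nn_integral[OF this] show ?thesis
    unfolding I1_def[abs_def] by simp
qed

lemma hatC_trunc_kernel_finite:
  assumes phi_C: "hatC j V \<phi>" and phi_pos: "\<And>y. 0 < \<phi> y"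
  shows "(\<integral>\<^sup>+y. ennreal (\<phi> y * trunc_kernel j x y) \<partial>muV V) < \<infinity>"
proof -
  have "(\<integral>\<^sup>+y. ennreal (\<phi> y * trunc_kernel j x y) \<partial>muV V)
      = (\<integral>\<^sup>+ y. indicator {y. norm (x - y) > 1} y * ennreal (\<bar>\<phi> y\<bar> * j x y) \<partial>muV V)"
    using phi_pos by (intro nn_integral_cong) (auto simp: trunc_kernel_def indicator_def abs_of_pos)
  also have "\<dots> < \<infinity>"
    using phi_C loc_bdd_ennreal_finite unfolding hatC_def by fastforce
  finally show ?thesis .
qed

(* At a point where both long-jump integrals are finite, hatL \<phi>(x) is
   \<integral> \<phi>(y) A(x,y) dy - \<phi>(x) \<integral> A(x,y) dy, so the real Lyapunov inequality
   becomes the [0,\<infinity>]-valued one required by lyapunov_hardy_inequality. *)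
lemma hatL_lyapunov_ennreal:
  fixes j :: "'a::euclidean_space \<Rightarrow> 'a \<Rightarrow> real" and \<phi> h :: "'a \<Rightarrow> real"
  assumes j_meas: "(\<lambda>p. j (fst p) (snd p)) \<in> borel_measurable borel"
    and j_nonneg: "\<And>x y. x \<noteq> y \<Longrightarrow> 0 \<le> j x y"
    and phi_meas: "\<phi> \<in> borel_measurable borel"
    and J_fin: "(\<integral>\<^sup>+y. ennreal (trunc_kernel j x y) \<partial>muV V) < \<infinity>"
    and PJ_fin: "(\<integral>\<^sup>+y. ennreal (\<phi> y * trunc_kernel j x y) \<partial>muV V) < \<infinity>"
    and phi_pos: "\<And>y. 0 < \<phi> y"
    and h_nn: "0 \<le> h x" and b_nn: "0 \<le> b"
    and lyap: "hatL j V \<phi> x \<le> - h x + b * indicator S x"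
  shows "ennreal (h x) + (\<integral>\<^sup>+y. ennreal (\<phi> y * trunc_kernel j x y) \<partial>muV V)
           \<le> ennreal (\<phi> x) * (\<integral>\<^sup>+y. ennreal (trunc_kernel j x y) \<partial>muV V) + ennreal b * indicator S x"
proof -
  have [measurable]: "(\<lambda>y. trunc_kernel j x y) \<in> borel_measurable (muV V)"
    using measurable_compose_Pair1[OF _ trunc_kernel_measurable[OF j_meas], of x] by simp
  have [measurable]: "\<phi> \<in> borel_measurable (muV V)"
    unfolding measurable_cong_sets[OF sets_muV refl] by (rule phi_meas)
  have J_nn: "0 \<le> trunc_kernel j x y" for y by (rule trunc_kernel_nonneg[OF j_nonneg])
  have PJ_nn: "0 \<le> \<phi> y * trunc_kernel j x y" for y using J_nn[of y] phi_pos[of y] by simp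
  have int_J: "integrable (muV V) (\<lambda>y. trunc_kernel j x y)"
    using J_fin J_nn by (intro integrableI_nonneg) auto
  have int_PJ: "integrable (muV V) (\<lambda>y. \<phi> y * trunc_kernel j x y)"
    using PJ_fin PJ_nn by (intro integrableI_nonneg) auto
  define IJ where "IJ = (\<integral>y. trunc_kernel j x y \<partial>muV V)"
  define IP where "IP = (\<integral>y. \<phi> y * trunc_kernel j x y \<partial>muV V)"
  have "hatL j V \<phi> x = (\<integral>y. \<phi> y * trunc_kernel j x y - \<phi> x * trunc_kernel j x y \<partial>muV V)"
    unfolding hatL_def
    by (intro Bochner_Integration.integral_cong) (auto simp: trunc_kernel_def indicator_def algebra_simps)
  also have "\<dots> = IP - \<phi> x * IJ"
    using int_J int_PJ by (simp add: IJ_def IP_def)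
  finally have "ennreal (h x + IP) \<le> ennreal (\<phi> x * IJ + b * indicator S x)"
    using lyap by (intro ennreal_leI) linarith
  moreover have "0 \<le> IP" "0 \<le> IJ"
    using J_nn PJ_nn by (simp_all add: IJ_def IP_def integral_nonneg_AE)
  moreover have "(\<integral>\<^sup>+y. ennreal (trunc_kernel j x y) \<partial>muV V) = ennreal IJ"
    unfolding IJ_def using int_J J_nn by (intro nn_integral_eq_integral) auto
  moreover have "(\<integral>\<^sup>+y. ennreal (\<phi> y * trunc_kernel j x y) \<partial>muV V) = ennreal IP"
    unfolding IP_def using int_PJ PJ_nn by (intro nn_integral_eq_integral) auto
  ultimately show ?thesis
    using h_nn b_nn phi_pos[of x]
    by (cases "x \<in> S") (simp_all add: ennreal_plus ennreal_mult')
qed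

lemma hatD_trunc_kernel:
  fixes V :: "'a::euclidean_space \<Rightarrow> real" and f :: "'a \<Rightarrow> real"
  assumes V_int: "integrable lborel (\<lambda>x. exp (- V x))"
    and j_meas: "(\<lambda>p. j (fst p) (snd p)) \<in> borel_measurable borel"
    and j_nonneg: "\<And>x y. x \<noteq> y \<Longrightarrow> 0 \<le> j x y"
    and f_meas: "f \<in> borel_measurable borel"
    and D_fin: "(\<integral>\<^sup>+x. \<integral>\<^sup>+y. ennreal ((f x - f y)\<^sup>2 * trunc_kernel j x y) \<partial>muV V \<partial>muV V) < \<infinity>"
  shows "ennreal (hatD j V f f)
           = ennreal (1/2) * (\<integral>\<^sup>+x. \<integral>\<^sup>+y. ennreal ((f x - f y)\<^sup>2 * trunc_kernel j x y) \<partial>muV V \<partial>muV V)"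
proof -
  interpret finite_measure "muV V" by (rule finite_measure_muV[OF V_int])
  have [measurable]: "f \<in> borel_measurable (muV V)"
    unfolding measurable_cong_sets[OF sets_muV refl] by (rule f_meas)
  note [measurable] = trunc_kernel_measurable[OF j_meas, of V]
  define G where "G p = (f (fst p) - f (snd p))\<^sup>2 * trunc_kernel j (fst p) (snd p)" for p
  have G_meas: "G \<in> borel_measurable (muV V \<Otimes>\<^sub>M muV V)"
    unfolding G_def by measurable
  have G_nn: "0 \<le> G p" for p
    unfolding G_def using trunc_kernel_nonneg[of j, OF j_nonneg] by simp
  have hatD_G: "hatD j V f f = 1/2 * (\<integral>p. G p \<partial>(muV V \<Otimes>\<^sub>M muV V))"
    unfolding hatD_def G_def
    by (intro arg_cong[where f="\<lambda>t. 1/2 * t"] Bochner_Integration.integral_cong)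
       (auto simp: trunc_kernel_def indicator_def power2_eq_square)
  have G_iter: "(\<integral>\<^sup>+p. ennreal (G p) \<partial>(muV V \<Otimes>\<^sub>M muV V))
      = (\<integral>\<^sup>+x. \<integral>\<^sup>+y. ennreal ((f x - f y)\<^sup>2 * trunc_kernel j x y) \<partial>muV V \<partial>muV V)"
    using nn_integral_fst[of "\<lambda>p. ennreal (G p)"] G_meas by (simp add: G_def)
  have "integrable (muV V \<Otimes>\<^sub>M muV V) G"
    using G_meas G_nn G_iter D_fin by (intro integrableI_nonneg) auto
  then have "ennreal (\<integral>p. G p \<partial>(muV V \<Otimes>\<^sub>M muV V))
      = (\<integral>\<^sup>+x. \<integral>\<^sup>+y. ennreal ((f x - f y)\<^sup>2 * trunc_kernel j x y) \<partial>muV V \<partial>muV V)"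
    using G_nn G_iter by (simp add: nn_integral_eq_integral[symmetric])
  moreover have "0 \<le> (\<integral>p. G p \<partial>(muV V \<Otimes>\<^sub>M muV V))"
    using G_nn by (simp add: integral_nonneg_AE)
  ultimately show ?thesis
    unfolding hatD_G using ennreal_mult'[of "1/2"] by simp
qed

(* For bounded f the "diagonal" integral \<integral>\<integral> f(x)\<^sup>2 A(x,y) is finite:
   it is at most sup f\<^sup>2 \<cdot> \<integral> I\<^sub>1 d\<mu>\<^sub>V. *)
lemma trunc_kernel_diagonal_finite:
  fixes V :: "'a::euclidean_space \<Rightarrow> real" and f :: "'a \<Rightarrow> real"
  assumes V_int: "integrable lborel (\<lambda>x. exp (- V x))"
    and j_meas: "(\<lambda>p. j (fst p) (snd p)) \<in> borel_measurable borel"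
    and j_nonneg: "\<And>x y. x \<noteq> y \<Longrightarrow> 0 \<le> j x y"
    and I1_L1: "(\<integral>\<^sup>+ x. I1 j V x \<partial>muV V) < \<infinity>"
    and f_bdd: "\<And>x. \<bar>f x\<bar> \<le> K"
  shows "(\<integral>\<^sup>+x. \<integral>\<^sup>+y. ennreal ((f x)\<^sup>2 * trunc_kernel j x y) \<partial>muV V \<partial>muV V) < \<infinity>"
proof -
  have [measurable]: "(\<lambda>y. trunc_kernel j x y) \<in> borel_measurable (muV V)" for x
    using measurable_compose_Pair1[OF _ trunc_kernel_measurable[OF j_meas], of x] by simp
  have "(\<integral>\<^sup>+x. \<integral>\<^sup>+y. ennreal ((f x)\<^sup>2 * trunc_kernel j x y) \<partial>muV V \<partial>muV V)
      = (\<integral>\<^sup>+x. ennreal ((f x)\<^sup>2) * (\<integral>\<^sup>+y. ennreal (trunc_kernel j x y) \<partial>muV V) \<partial>muV V)"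
    by (simp add: ennreal_mult' nn_integral_cmult)
  also have "\<dots> \<le> (\<integral>\<^sup>+x. ennreal (K\<^sup>2) * I1 j V x \<partial>muV V)"
  proof (intro nn_integral_mono mult_mono)
    fix x
    show "ennreal ((f x)\<^sup>2) \<le> ennreal (K\<^sup>2)"
      using power_mono[OF f_bdd[of x] abs_ge_zero, of 2] by (simp add: ennreal_leI)
    show "(\<integral>\<^sup>+y. ennreal (trunc_kernel j x y) \<partial>muV V) \<le> I1 j V x"
      by (rule trunc_kernel_le_I1[of j, OF j_nonneg])
  qed auto
  also have "\<dots> = ennreal (K\<^sup>2) * (\<integral>\<^sup>+x. I1 j V x \<partial>muV V)"
    by (rule nn_integral_cmult[OF I1_measurable[OF V_int j_meas]])
  also have "\<dots> < \<infinity>"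
    using I1_L1 by (simp add: ennreal_mult_less_top)
  finally show ?thesis .
qed

(* Boundedness of f and
   I\<^sub>1 \<in> L\<^sup>1(\<mu>\<^sub>V) make \<integral>\<integral> f(x)\<^sup>2 A(x,y) finite, local boundedness of I\<^sub>1 and
   \<phi> \<in> hatC make the Lyapunov condition meaningful pointwise. *)
lemma truncated_hardy_bounded:
  fixes V :: "'a::euclidean_space \<Rightarrow> real" and j :: "'a \<Rightarrow> 'a \<Rightarrow> real"
    and \<phi> h f :: "'a \<Rightarrow> real" and S :: "'a set" and b K :: real
  assumes V_int: "integrable lborel (\<lambda>x. exp (- V x))"
    and j_meas: "(\<lambda>p. j (fst p) (snd p)) \<in> borel_measurable borel"
    and j_nonneg: "\<And>x y. x \<noteq> y \<Longrightarrow> j x y \<ge> 0"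
    and j_sym: "\<And>x y. x \<noteq> y \<Longrightarrow> j x y = j y x"
    and I1_L1: "(\<integral>\<^sup>+ x. I1 j V x \<partial>muV V) < \<infinity>"
    and I1_lb: "loc_bdd_ennreal (I1 j V)"
    and phi_pos: "\<And>x. \<phi> x > 0" and phi_C: "hatC j V \<phi>"
    and h_meas: "h \<in> borel_measurable borel" and h_nn: "\<And>x. 0 \<le> h x"
    and S_meas: "S \<in> sets borel" and b_nn: "0 \<le> b"
    and Lyap: "\<And>x. hatL j V \<phi> x \<le> - h x + b * indicator S x"
    and f_meas: "f \<in> borel_measurable borel" and f_bdd: "\<And>x. \<bar>f x\<bar> \<le> K"
  shows "(\<integral>\<^sup>+ x. ennreal ((f x)\<^sup>2 * h x / \<phi> x) \<partial>muV V)
           \<le> ennreal (hatD j V f f) + ennreal b * (\<integral>\<^sup>+ x. indicator S x * ennreal ((f x)\<^sup>2 / \<phi> x) \<partial>muV V)"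
proof -
  define M where "M = muV V"
  interpret finite_measure M unfolding M_def by (rule finite_measure_muV[OF V_int])
  define A where "A = trunc_kernel j"
  have phi_meas: "\<phi> \<in> borel_measurable borel"
    using phi_C unfolding hatC_def by (auto intro: smooth_fun_measurable)
  have A_meas: "(\<lambda>p. A (fst p) (snd p)) \<in> borel_measurable (M \<Otimes>\<^sub>M M)"
    unfolding A_def M_def by (rule trunc_kernel_measurable[OF j_meas])
  have A_nn: "0 \<le> A x y" for x y
    unfolding A_def by (rule trunc_kernel_nonneg[of j, OF j_nonneg])
  have A_sym: "A x y = A y x" for x y
    unfolding A_def by (rule trunc_kernel_sym[of j, OF j_sym])
  have meas_M: "g \<in> borel_measurable M" if "g \<in> borel_measurable borel" for g :: "'a \<Rightarrow> real"
    unfolding M_def measurable_cong_sets[OF sets_muV refl] by (rule that)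
  have lyap: "ennreal (h x) + (\<integral>\<^sup>+y. ennreal (\<phi> y * A x y) \<partial>M)
      \<le> ennreal (\<phi> x) * (\<integral>\<^sup>+y. ennreal (A x y) \<partial>M) + ennreal b * indicator S x" for x
    unfolding A_def M_def
  proof (rule hatL_lyapunov_ennreal[OF j_meas j_nonneg phi_meas _ _ phi_pos h_nn b_nn Lyap])
    show "(\<integral>\<^sup>+y. ennreal (trunc_kernel j x y) \<partial>muV V) < \<infinity>"
      using trunc_kernel_le_I1[of j, OF j_nonneg] loc_bdd_ennreal_finite[OF I1_lb]
      by (rule le_less_trans)
    show "(\<integral>\<^sup>+y. ennreal (\<phi> y * trunc_kernel j x y) \<partial>muV V) < \<infinity>"
      by (rule hatC_trunc_kernel_finite[OF phi_C phi_pos])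
  qed
  have P_fin: "(\<integral>\<^sup>+x. \<integral>\<^sup>+y. ennreal ((f x)\<^sup>2 * A x y) \<partial>M \<partial>M) < \<infinity>"
    unfolding A_def M_def by (rule trunc_kernel_diagonal_finite[OF V_int j_meas j_nonneg I1_L1 f_bdd])
  have hardy: "(\<integral>\<^sup>+x. ennreal ((f x)\<^sup>2 * h x / \<phi> x) \<partial>M)
      \<le> ennreal (1/2) * (\<integral>\<^sup>+x. \<integral>\<^sup>+y. ennreal ((f x - f y)\<^sup>2 * A x y) \<partial>M \<partial>M)
         + ennreal b * (\<integral>\<^sup>+x. indicator S x * ennreal ((f x)\<^sup>2 / \<phi> x) \<partial>M)"
    by (rule lyapunov_hardy_inequality[OF A_meas A_nn A_sym meas_M[OF phi_meas] phi_pos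
          meas_M[OF h_meas] meas_M[OF f_meas] _ lyap P_fin])
       (simp add: M_def sets_muV S_meas)
  have "(\<integral>\<^sup>+x. \<integral>\<^sup>+y. ennreal ((f x - f y)\<^sup>2 * A x y) \<partial>M \<partial>M) < \<infinity>"
    using dirichlet_energy_le[OF A_meas A_nn A_sym meas_M[OF f_meas]] P_fin
    by (auto simp: ennreal_mult_less_top intro: le_less_trans)
  from hatD_trunc_kernel[OF V_int j_meas j_nonneg f_meas this[unfolded M_def A_def]] hardy
  show ?thesis by (simp add: M_def A_def)
qed

(* The proposition: C_c^\<infinity> and C_b^\<infinity> test functions are bounded Borel functions. *)
theorem proposition3p2:
  fixes V :: "'a::euclidean_space \<Rightarrow> real"
    and j :: "'a \<Rightarrow> 'a \<Rightarrow> real"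
    and \<phi> h :: "'a \<Rightarrow> real"
    and b r :: real
  assumes V_meas: "V \<in> borel_measurable borel"
    and V_lb: "loc_bdd V"
    and V_int: "integrable lborel (\<lambda>x. exp (- V x))"
    and j_meas: "(\<lambda>p. j (fst p) (snd p)) \<in> borel_measurable borel"
    and j_nonneg: "\<And>x y. x \<noteq> y \<Longrightarrow> j x y \<ge> 0"
    and j_sym: "\<And>x y. x \<noteq> y \<Longrightarrow> j x y = j y x"
    and I1_L1: "(\<integral>\<^sup>+ x. I1 j V x \<partial>muV V) < \<infinity>"
    and I1_lb: "loc_bdd_ennreal (I1 j V)"
    and I2_lb: "loc_bdd_ennreal (I2 j V)"
    and phi_pos: "\<And>x. \<phi> x > 0"
    and phi_C: "hatC j V \<phi>"
    and h_pos: "\<And>x. h x > 0"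
    and h_smooth: "smooth_fun h"
    and b_pos: "b > 0" and r_pos: "r > 0"
    and Lyap: "\<And>x. hatL j V \<phi> x \<le> - h x + b * indicator (ball 0 r) x"
  shows "(\<forall>f. Cc_inf f \<longrightarrow>
            (\<integral>\<^sup>+ x. ennreal ((f x)\<^sup>2 * h x / \<phi> x) \<partial>muV V)
              \<le> ennreal (hatD j V f f)
                 + ennreal b * (\<integral>\<^sup>+ x. indicator (ball 0 r) x * ennreal ((f x)\<^sup>2 / \<phi> x) \<partial>muV V))
       \<and> ((\<exists>c>0. \<forall>x. c \<le> \<phi> x) \<longrightarrow>
          (\<forall>f. Cb_inf f \<longrightarrow>
            (\<integral>\<^sup>+ x. ennreal ((f x)\<^sup>2 * h x / \<phi> x) \<partial>muV V)
              \<le> ennreal (hatD j V f f)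
                 + ennreal b * (\<integral>\<^sup>+ x. indicator (ball 0 r) x * ennreal ((f x)\<^sup>2 / \<phi> x) \<partial>muV V)))"
proof -
  have hardy: "(\<integral>\<^sup>+ x. ennreal ((f x)\<^sup>2 * h x / \<phi> x) \<partial>muV V)
                \<le> ennreal (hatD j V f f)
                   + ennreal b * (\<integral>\<^sup>+ x. indicator (ball 0 r) x * ennreal ((f x)\<^sup>2 / \<phi> x) \<partial>muV V)"
    if "f \<in> borel_measurable borel \<and> (\<exists>K. \<forall>x. \<bar>f x\<bar> \<le> K)" for f
  proof -
    from that obtain K where "f \<in> borel_measurable borel" "\<And>x. \<bar>f x\<bar> \<le> K" by blast
    from truncated_hardy_bounded[OF V_int j_meas j_nonneg j_sym I1_L1 I1_lb phi_pos phi_C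
        smooth_fun_measurable[OF h_smooth] less_imp_le[OF h_pos] _ less_imp_le[OF b_pos] Lyap this]
    show ?thesis by simp
  qed
  have "f \<in> borel_measurable borel \<and> (\<exists>K. \<forall>x. \<bar>f x\<bar> \<le> K)" if "Cc_inf f \<or> Cb_inf f" for f
    using that Cc_inf_bounded Cb_inf_bounded by blast
  with hardy show ?thesis by blast
qed

end
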